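(* Let $\Omega_{1/2}=\{\operatorname{Re}(s)>\tfrac12\}\setminus[\tfrac12,1]$. The following are equivalent: (1) $\eta_1(s)$ extends to an analytic function on $\Omega_{1/2}$; (2) $\eta_1(s)$ extends to a meromorphic function on $\Omega_{1/2}$; (3) $\zeta(s)$ has no zeros in $\Omega_{1/2}$; (4) for some integer $i\ge2$ (equivalently, for all integers $i\ge1$), $\zeta_i(s)$ extends to an analytic function on $\Omega_{1/2}$ with no zeros in $\Omega_{1/2}$; (5) for some integer $n\ge1$ (equivalently, for all integers $n\ge1$), $\eta_1(s)^n$ extends to a meromorphic function on $\Omega_{1/2}$.
   Context: Let $p_1=2<p_2=3<\dots$ be the primes in increasing order, $\mathbb{P}$ the set of primes. $\eta_1(s)=\sum_{p\in\mathbb{P}}p^{-s}$ for $\operatorname{Re}(s)>1$. For $k\ge1$, $M_k=\{p_{1+jk}:j\ge0\}$ and $\zeta_k(s)=\prod_{p\in M_k}(1-p^{-s})^{-1}$ for $\operatorname{Re}(s)>1$. Extension to $\Omega_{1/2}$ means agreement with the given function on $\{\operatorname{Re}(s)>1\}$. *)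

theory Defs
  imports "HOL-Complex_Analysis.Complex_Analysis" "HOL-Computational_Algebra.Primes"
    "HOL-Library.Infinite_Set"
begin

text \<open>The j-th prime, 0-indexed: pr 0 = 2, pr 1 = 3, ...  (so p_{m} = pr (m - 1)).\<close>
definition pr :: "nat \<Rightarrow> nat" where
  "pr j = enumerate {p::nat. prime p} j"

definition M :: "nat \<Rightarrow> nat set" where
  "M k = {pr (j * k) | j. True}"

text \<open>eta_1(s) = sum over primes p of p^(-s)  (meaningful for Re s > 1)\<close>
definition eta1 :: "complex \<Rightarrow> complex" where
  "eta1 s = (\<Sum>\<^sub>\<infinity>p\<in>{p::nat. prime p}. (of_nat p :: complex) powr (- s))"

definition zetak :: "nat \<Rightarrow> complex \<Rightarrow> complex" where
  "zetak k s = (\<Prod>j. inverse (1 - (of_nat (pr (j * k)) :: complex) powr (- s)))"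

definition zeta :: "complex \<Rightarrow> complex" where
  "zeta s = (\<Sum>n. (of_nat (Suc n) :: complex) powr (- s))"

definition Omega_half :: "complex set" where
  "Omega_half = {s. Re s > 1/2} - {complex_of_real x | x. 1/2 \<le> x \<and> x \<le> 1}"

definition extends_analytic :: "(complex \<Rightarrow> complex) \<Rightarrow> complex set \<Rightarrow> bool" where
  "extends_analytic F A \<longleftrightarrow> (\<exists>g. g holomorphic_on A \<and> (\<forall>s. Re s > 1 \<longrightarrow> g s = F s))"

definition extends_meromorphic :: "(complex \<Rightarrow> complex) \<Rightarrow> complex set \<Rightarrow> bool" where
  "extends_meromorphic F A \<longleftrightarrow> (\<exists>g. g meromorphic_on A \<and> (\<forall>s. Re s > 1 \<longrightarrow> g s = F s))"

definition extends_analytic_nonzero :: "(complex \<Rightarrow> complex) \<Rightarrow> complex set \<Rightarrow> bool" where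
  "extends_analytic_nonzero F A \<longleftrightarrow>
     (\<exists>g. g holomorphic_on A \<and> (\<forall>s. Re s > 1 \<longrightarrow> g s = F s) \<and> (\<forall>s\<in>A. g s \<noteq> 0))"

end

theory Submission
  imports Defs
begin

text \<open>
  For Re s > 1 the Euler product gives zeta_k(s) = exp ((eta_1(s) + A_k(s)) / k) with A_k
  holomorphic on Re s > 1/2: log zeta_k(s) is the sum of p^(-s) over p in M_k plus a series of
  terms of size p^(-2 Re s), and k times that prime sum differs from eta_1(s) by the sum of the
  blocks p_(1+jk)^(-s) - p_(1+jk+i)^(-s), i < k, which telescopes and converges on Re s > 0.
  Hence a continuation of eta_1 to Omega exponentiates to zero-free continuations of all zeta_k,
  and conversely a zero-free continuation of one zeta_k has a logarithm on the starlike set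
  Omega, which yields a continuation of eta_1.

  Since zeta = zeta_1 continues to Omega anyway, it remains to see that a meromorphic
  continuation G of eta_1^n excludes zeros of zeta. Differentiating G = (log zeta - A_1)^n and
  using the identity theorem gives G'^n = n^n G^(n-1) (zeta'/zeta - A_1')^n on all of Omega.
  Near a zero s0 of zeta of order m > 0 we have (s - s0) zeta'/zeta --> m and
  (s - s0) G'/G --> k, the order of G at s0. Multiplying the identity by (s - s0)^n / G^n gives
  ((s - s0) G'/G)^n G = (n (s - s0) (zeta'/zeta - A_1'))^n, whose right side tends to
  (n m)^n \<noteq> 0. This is impossible for k = 0, where the left side tends to 0, and for k \<noteq> 0,
  where G would have a finite nonzero limit at s0.
\<close>

section \<open>Complex analysis\<close>

lemma holomorphic_on_suminf_halfplane:
  fixes f :: "nat \<Rightarrow> complex \<Rightarrow> complex"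
  assumes S: "open S" "S \<subseteq> {s. c < Re s}" and hol: "\<And>n. f n holomorphic_on S"
    and bound: "\<And>\<sigma> R. c < \<sigma> \<Longrightarrow>
      \<exists>M. summable M \<and> (\<forall>n. \<forall>s\<in>S. \<sigma> \<le> Re s \<longrightarrow> norm s \<le> R \<longrightarrow> norm (f n s) \<le> M n)"
  shows "(\<lambda>s. \<Sum>n. f n s) holomorphic_on S"
proof (rule holomorphic_uniform_sequence[where f = "\<lambda>N s. \<Sum>n<N. f n s"])
  show "(\<lambda>s. \<Sum>n<N. f n s) holomorphic_on S" for N
    using hol by (intro holomorphic_on_sum) blast
  fix z assume z: "z \<in> S"
  obtain e where e: "e > 0" "cball z e \<subseteq> S" using S(1) z open_contains_cball by blast
  have "c < Re z" using S(2) z by auto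
  define \<sigma> where "\<sigma> = (Re z + c) / 2"
  define d where "d = min e (min 1 (Re z - \<sigma>))"
  obtain M where M: "summable M"
    "\<And>n s. s \<in> S \<Longrightarrow> \<sigma> \<le> Re s \<Longrightarrow> norm s \<le> norm z + 1 \<Longrightarrow> norm (f n s) \<le> M n"
    using bound[of \<sigma> "norm z + 1"] \<open>c < Re z\<close> by (auto simp: \<sigma>_def)
  have d: "d > 0" "cball z d \<subseteq> S" using e \<open>c < Re z\<close> by (auto simp: d_def \<sigma>_def)
  have "\<sigma> \<le> Re s \<and> norm s \<le> norm z + 1" if "s \<in> cball z d" for s
  proof -
    have "norm (z - s) \<le> d" using that by (simp add: dist_norm)
    moreover have "Re z - Re s \<le> norm (z - s)" using complex_Re_le_cmod[of "z - s"] by simp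
    moreover have "norm s \<le> norm z + norm (z - s)" using norm_triangle_sub[of s z] by (simp add: norm_minus_commute)
    ultimately show ?thesis by (auto simp: d_def)
  qed
  then have "uniform_limit (cball z d) (\<lambda>N s. \<Sum>n<N. f n s) (\<lambda>s. \<Sum>n. f n s) sequentially"
    using d(2) by (intro Weierstrass_m_test[OF _ M(1)]) (auto intro!: M(2))
  then show "\<exists>d>0. cball z d \<subseteq> S \<and> uniform_limit (cball z d) (\<lambda>N s. \<Sum>n<N. f n s) (\<lambda>s. \<Sum>n. f n s) sequentially"
    using d by blast
qed (fact S)

lemma norm_of_real_powr_diff_le:
  fixes a b \<delta> :: real and s :: complex
  assumes "1 \<le> a" "a \<le> b" "0 < \<delta>" "\<delta> \<le> Re s"
  shows "norm (of_real a powr - s - of_real b powr - s) \<le> norm s / \<delta> * (a powr - \<delta> - b powr - \<delta>)"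
proof -
  define h where "h = (\<lambda>y::complex. y powr (s / of_real \<delta>))"
  have h: "h (of_real (x powr - \<delta>)) = of_real x powr - s" if "0 < x" for x
    using that assms(3) by (simp add: h_def powr_def Ln_of_real field_simps)
  define y\<^sub>1 y\<^sub>2 where "y\<^sub>1 = b powr - \<delta>" and "y\<^sub>2 = a powr - \<delta>"
  have y: "0 < y\<^sub>1" "y\<^sub>1 \<le> y\<^sub>2" "y\<^sub>2 \<le> 1"
    using assms powr_mono[of "- \<delta>" 0 a] by (auto simp: y\<^sub>1_def y\<^sub>2_def intro: powr_mono2')
  \<comment> \<open>In the variable \<open>y = x powr - \<delta>\<close> the function becomes \<open>y powr (s/\<delta>)\<close>,
      whose derivative is bounded by \<open>norm s / \<delta>\<close> on \<open>0 < y \<le> 1\<close> because \<open>Re (s/\<delta>) \<ge> 1\<close>.\<close>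
  have "norm (h y\<^sub>2 - h y\<^sub>1) \<le> norm s / \<delta> * norm (of_real y\<^sub>2 - of_real y\<^sub>1 :: complex)"
  proof (rule field_differentiable_bound[where S = "closed_segment (of_real y\<^sub>1) (of_real y\<^sub>2)"])
    fix z assume "z \<in> closed_segment (of_real y\<^sub>1) (of_real y\<^sub>2 :: complex)"
    then obtain t where t: "z = of_real t" "y\<^sub>1 \<le> t" "t \<le> y\<^sub>2"
      using y by (auto simp: closed_segment_of_real closed_segment_eq_real_ivl)
    then have "z \<notin> \<real>\<^sub>\<le>\<^sub>0" using y by (auto simp: complex_nonpos_Reals_iff)
    then show "(h has_field_derivative (s / of_real \<delta> * z powr (s / of_real \<delta> - 1)))
        (at z within closed_segment (of_real y\<^sub>1) (of_real y\<^sub>2))"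
      unfolding h_def by (rule has_field_derivative_at_within[OF has_field_derivative_powr])
    have "norm (z powr (s / of_real \<delta> - 1)) = t powr (Re s / \<delta> - 1)"
      using t y by (simp add: norm_powr_real_powr)
    also have "\<dots> \<le> 1" using t y assms by (intro powr_le1) auto
    finally have "norm s / \<delta> * norm (z powr (s / of_real \<delta> - 1)) \<le> norm s / \<delta>"
      by (rule mult_left_le) (use assms in auto)
    then show "norm (s / of_real \<delta> * z powr (s / of_real \<delta> - 1)) \<le> norm s / \<delta>"
      using assms by (simp add: norm_mult norm_divide)
  qed auto
  also have "norm (of_real y\<^sub>2 - of_real y\<^sub>1 :: complex) = y\<^sub>2 - y\<^sub>1"
    using y by (simp flip: of_real_diff)
  finally show ?thesis using assms by (simp add: h y\<^sub>1_def y\<^sub>2_def)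
qed

lemma exp_eq_imp_diff_constant:
  fixes f g :: "complex \<Rightarrow> complex"
  assumes hol: "f holomorphic_on S" "g holomorphic_on S" and S: "open S" "connected S"
    and exp_eq: "\<And>s. s \<in> S \<Longrightarrow> exp (f s) = exp (g s)"
  obtains c where "\<And>s. s \<in> S \<Longrightarrow> f s = g s + c"
proof -
  have "(\<lambda>s. f s - g s) constant_on S"
  proof (rule has_field_derivative_0_imp_constant_on[OF _ S(2,1)])
    fix z assume z: "z \<in> S"
    define D where "D s = f s - g s" for s
    have dD: "(D has_field_derivative deriv D z) (at z)"
      unfolding D_def[abs_def] using hol S z by (intro holomorphic_derivI[of _ S] holomorphic_intros)
    have "((\<lambda>s. exp (D s)) has_field_derivative exp (D z) * deriv D z) (at z)"
      by (rule DERIV_chain2[OF DERIV_exp dD])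
    moreover have "((\<lambda>s. exp (D s)) has_field_derivative 0) (at z)"
    proof (rule has_field_derivative_transform_within_open[OF DERIV_const S(1) z])
      show "1 = exp (D s)" if "s \<in> S" for s
        using exp_eq[OF that] by (simp add: D_def exp_diff)
    qed
    ultimately have "deriv D z = 0"
      using DERIV_unique by fastforce
    with dD show "((\<lambda>s. f s - g s) has_field_derivative 0) (at z)"
      by (simp add: D_def[abs_def])
  qed
  then show ?thesis
    using that by (auto simp: constant_on_def algebra_simps)
qed

lemma meromorphic_eventually_eq_transfer:
  assumes "f meromorphic_on S" "open S" "connected S" "z0 \<in> S" "z \<in> S"
    and "\<forall>\<^sub>F w in at z0. f w = c"
  shows "\<forall>\<^sub>F w in at z. f w = c"
proof -
  have "\<not> (\<forall>\<^sub>F w in at z0. f w \<noteq> c)"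
  proof
    assume "\<forall>\<^sub>F w in at z0. f w \<noteq> c"
    with assms(6) have "\<forall>\<^sub>F w in at z0. False" by eventually_elim auto
    then show False by simp
  qed
  then have "\<not> (\<forall>\<^sub>F w in cosparse S. f w \<noteq> c)"
    using assms(2,4) by (auto simp: eventually_cosparse_open_eq)
  then have "\<forall>\<^sub>F w in cosparse S. f w = c"
    using meromorphic_imp_constant_or_avoid[OF assms(1-3)] by blast
  then show ?thesis
    using assms(2,5) by (auto simp: eventually_cosparse_open_eq)
qed

lemma meromorphic_eventually_neq_transfer:
  assumes "f meromorphic_on S" "open S" "connected S" "z0 \<in> S" "z \<in> S"
    and "\<forall>\<^sub>F w in at z0. f w \<noteq> c"
  shows "\<forall>\<^sub>F w in at z. f w \<noteq> c"
proof -
  have "\<not> (\<forall>\<^sub>F w in at z0. f w = c)"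
  proof
    assume "\<forall>\<^sub>F w in at z0. f w = c"
    with assms(6) have "\<forall>\<^sub>F w in at z0. False" by eventually_elim auto
    then show False by simp
  qed
  then have "\<not> (\<forall>\<^sub>F w in cosparse S. f w = c)"
    using assms(2,4) by (auto simp: eventually_cosparse_open_eq)
  then have "\<forall>\<^sub>F w in cosparse S. f w \<noteq> c"
    using meromorphic_imp_constant_or_avoid[OF assms(1-3)] by blast
  then show ?thesis
    using assms(2,5) by (auto simp: eventually_cosparse_open_eq)
qed

lemma tendsto_log_deriv_zorder:
  fixes f :: "complex \<Rightarrow> complex"
  assumes mero: "f meromorphic_on {z}" and nz: "\<exists>\<^sub>F w in at z. f w \<noteq> 0"
  shows "((\<lambda>w. (w - z) * deriv f w / f w) \<longlongrightarrow> of_int (zorder f z)) (at z)"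
proof -
  define k where "k = zorder f z"
  obtain g r where g: "0 < r" "g holomorphic_on cball z r" "g z \<noteq> 0"
    "\<And>w. w \<in> cball z r - {z} \<Longrightarrow> f w = g w * (w - z) powi k \<and> g w \<noteq> 0"
    using zorder_exist[OF meromorphic_on_isolated_singularity[OF mero]
        meromorphic_on_not_essential[OF mero] nz] unfolding k_def by blast
  have hol: "g holomorphic_on ball z r" using g(2) by (rule holomorphic_on_subset) auto
  have "(w - z) * deriv f w / f w = (w - z) * deriv g w / g w + of_int k"
    if w: "w \<in> ball z r - {z}" for w
  proof -
    have "open (ball z r - {z})" by auto
    from eventually_nhds_in_open[OF this w] have "\<forall>\<^sub>F x in nhds w. f x = g x * (x - z) powi k"
      by eventually_elim (use g(4) in auto)
    then have "deriv f w = deriv (\<lambda>x. g x * (x - z) powi k) w"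
      by (rule deriv_cong_ev) simp
    also have "\<dots> = deriv g w * (w - z) powi k + g w * (of_int k * (w - z) powi (k - 1))"
      using w holomorphic_derivI[OF hol, of w UNIV] by (intro DERIV_imp_deriv derivative_eq_intros) auto
    also have "(w - z) powi (k - 1) = (w - z) powi k / (w - z)"
      using w by (simp add: power_int_diff)
    finally have df: "deriv f w = deriv g w * (w - z) powi k + g w * (of_int k * ((w - z) powi k / (w - z)))" .
    have fw: "f w = g w * (w - z) powi k" and "g w \<noteq> 0" "w - z \<noteq> 0" "(w - z) powi k \<noteq> 0"
      using w g(4)[of w] by auto
    then show ?thesis
      unfolding df fw by (simp add: field_simps)
  qed
  then have "\<forall>\<^sub>F w in at z. (w - z) * deriv g w / g w + of_int k = (w - z) * deriv f w / f w"
    using eventually_at_in_open[of "ball z r" z] g(1) by (auto elim!: eventually_mono)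
  moreover have "isCont g z" "isCont (deriv g) z"
    using hol g(1) by (auto intro!: continuous_on_interior holomorphic_on_imp_continuous_on holomorphic_deriv)
  then have "isCont (\<lambda>w. (w - z) * deriv g w / g w + of_int k) z"
    using g(3) by (intro continuous_intros)
  ultimately show ?thesis
    unfolding k_def isCont_def by (auto intro: Lim_transform_eventually)
qed

lemma tendsto_log_deriv_zorder_holomorphic:
  fixes Z A :: "complex \<Rightarrow> complex"
  assumes B: "open B" "s0 \<in> B" and Z: "Z holomorphic_on B" and A: "A holomorphic_on B"
    and nz: "\<exists>\<^sub>F s in at s0. Z s \<noteq> 0"
  shows "((\<lambda>s. (s - s0) * (deriv Z s / Z s - deriv A s)) \<longlongrightarrow> of_int (zorder Z s0)) (at s0)"
proof -
  have "Z analytic_on {s0}"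
    using Z B analytic_on_open analytic_on_subset by blast
  then have "((\<lambda>s. (s - s0) * deriv Z s / Z s) \<longlongrightarrow> of_int (zorder Z s0)) (at s0)"
    by (intro tendsto_log_deriv_zorder[OF analytic_on_imp_meromorphic_on nz])
  moreover have "isCont (deriv A) s0"
    using A B by (intro continuous_on_interior[OF holomorphic_on_imp_continuous_on] holomorphic_deriv)
      (auto simp: interior_open)
  ultimately have "((\<lambda>s. (s - s0) * deriv Z s / Z s - (s - s0) * deriv A s)
      \<longlongrightarrow> of_int (zorder Z s0) - (s0 - s0) * deriv A s0) (at s0)"
    by (intro tendsto_intros) (auto simp: isCont_def)
  then show ?thesis
    by (simp add: right_diff_distrib)
qed

lemma powi_exponent_eq_0_iff_limit_nonzero:
  fixes L R :: "complex \<Rightarrow> complex"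
  assumes L: "(L \<longlongrightarrow> a) (at z)" and R: "(R \<longlongrightarrow> b) (at z)" and "b \<noteq> 0"
    and eq: "\<forall>\<^sub>F w in at z. L w * (w - z) powi k = R w"
  shows "k = 0 \<longleftrightarrow> a \<noteq> 0"
proof (cases k "0::int" rule: linorder_cases)
  case less
  define m where "m = nat (- k)"
  have "\<forall>\<^sub>F w in at z. R w * (w - z) ^ m = L w"
    using eq eventually_neq_at_within[of z z]
    by eventually_elim (use less in \<open>auto simp: m_def power_int_def field_simps\<close>)
  moreover have "((\<lambda>w. R w * (w - z) ^ m) \<longlongrightarrow> b * (z - z) ^ m) (at z)"
    by (intro tendsto_intros R)
  ultimately have "(L \<longlongrightarrow> b * (z - z) ^ m) (at z)"
    by (rule Lim_transform_eventually[rotated])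
  then have "a = 0"
    using tendsto_unique[OF _ L] less by (simp add: m_def)
  then show ?thesis using less by simp
next
  case equal
  then have "\<forall>\<^sub>F w in at z. L w = R w"
    using eq by simp
  then have "(L \<longlongrightarrow> b) (at z)"
    using R by (simp add: tendsto_cong)
  then show ?thesis
    using tendsto_unique[OF _ L] equal \<open>b \<noteq> 0\<close> by auto
next
  case greater
  have "((\<lambda>w. L w * (w - z) powi k) \<longlongrightarrow> a * (z - z) powi k) (at z)"
    using greater by (intro tendsto_intros L) auto
  then have "(R \<longlongrightarrow> 0) (at z)"
    using eq greater by (auto intro: Lim_transform_eventually)
  then show ?thesis
    using tendsto_unique[OF _ R] \<open>b \<noteq> 0\<close> by auto
qed

lemma rescale_log_deriv_power_identity:
  fixes e D G g Q :: complex
  assumes "e \<noteq> 0" "G \<noteq> 0" "G = g * e powi k" "1 \<le> n"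
    and "D ^ n = of_nat n ^ n * G ^ (n - 1) * Q ^ n"
  shows "(e * D / G) ^ n * g * e powi k = (of_nat n * (e * Q)) ^ n"
proof -
  obtain n' where n': "n = Suc n'" using assms(4) by (cases n) auto
  have "(e * D / G) ^ n * g * e powi k = (e * D / G) ^ n * G"
    using assms(3) by (simp add: mult.assoc)
  also have "\<dots> = e ^ n * D ^ n / G ^ n'"
    using assms(2) by (simp add: n' power_divide power_mult_distrib)
  also have "\<dots> = e ^ n * (of_nat n ^ n * G ^ n' * Q ^ n) / G ^ n'"
    using assms(5) by (simp add: n')
  also have "\<dots> = (of_nat n * (e * Q)) ^ n"
    using assms(2) by (simp add: power_mult_distrib)
  finally show ?thesis .
qed

lemma nonzero_if_log_deriv_power_identity:
  fixes Z A G :: "complex \<Rightarrow> complex"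
  assumes B: "open B" "s0 \<in> B" and Z: "Z holomorphic_on B" and A: "A holomorphic_on B"
    and G: "G meromorphic_on {s0}" and n: "1 \<le> n"
    and G_nz: "\<forall>\<^sub>F s in at s0. G s \<noteq> 0" and Z_nz: "\<forall>\<^sub>F s in at s0. Z s \<noteq> 0"
    and identity: "\<forall>\<^sub>F s in at s0.
      deriv G s ^ n = of_nat n ^ n * G s ^ (n - 1) * (deriv Z s / Z s - deriv A s) ^ n"
  shows "Z s0 \<noteq> 0"
proof
  assume "Z s0 = 0"
  define k where "k = zorder G s0"
  define W where "W s = (s - s0) * deriv G s / G s" for s
  define V where "V s = (s - s0) * (deriv Z s / Z s - deriv A s)" for s
  have G_freq: "\<exists>\<^sub>F s in at s0. G s \<noteq> 0" and Z_freq: "\<exists>\<^sub>F s in at s0. Z s \<noteq> 0"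
    using G_nz Z_nz by (auto intro: eventually_frequently)
  have "0 < zorder Z s0"
    using zorder_pos_iff[OF Z B Z_freq] \<open>Z s0 = 0\<close> by simp
  have W: "(W \<longlongrightarrow> of_int k) (at s0)"
    unfolding W_def[abs_def] k_def by (rule tendsto_log_deriv_zorder[OF G G_freq])
  have V: "(V \<longlongrightarrow> of_int (zorder Z s0)) (at s0)"
    unfolding V_def[abs_def] by (rule tendsto_log_deriv_zorder_holomorphic[OF B Z A Z_freq])
  obtain g r where g: "0 < r" "g holomorphic_on cball s0 r" "g s0 \<noteq> 0"
    "\<And>s. s \<in> cball s0 r - {s0} \<Longrightarrow> G s = g s * (s - s0) powi k \<and> g s \<noteq> 0"
    using zorder_exist[OF meromorphic_on_isolated_singularity[OF G] meromorphic_on_not_essential[OF G]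
        G_freq] unfolding k_def by auto
  have "isCont g s0"
    using g(1,2) by (intro continuous_on_interior[OF holomorphic_on_imp_continuous_on]) auto
  then have L: "((\<lambda>s. W s ^ n * g s) \<longlongrightarrow> of_int k ^ n * g s0) (at s0)"
    using W by (intro tendsto_intros) (auto simp: isCont_def)
  have "\<forall>\<^sub>F s in at s0. s \<in> ball s0 r - {s0}"
    using g(1) by (intro eventually_at_in_open) auto
  with identity G_nz
  have "\<forall>\<^sub>F s in at s0. (W s ^ n * g s) * (s - s0) powi k = (of_nat n * V s) ^ n"
  proof eventually_elim
    case (elim s)
    then have "G s = g s * (s - s0) powi k" using g(4)[of s] by auto
    from rescale_log_deriv_power_identity[OF _ elim(2) this n elim(1)] elim(3)
    show ?case by (simp add: W_def V_def)
  qed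
  from powi_exponent_eq_0_iff_limit_nonzero[OF L tendsto_power[OF tendsto_mult[OF tendsto_const V]] _ this]
  have "k = 0 \<longleftrightarrow> of_int k ^ n * g s0 \<noteq> 0"
    using n \<open>0 < zorder Z s0\<close> by simp
  then show False
    using n g(3) by simp
qed

lemma deriv_power_log_identity:
  fixes Z A H G :: "complex \<Rightarrow> complex"
  assumes U: "open U" "u \<in> U" and H: "H holomorphic_on U" and A: "A holomorphic_on U"
    and Z_eq: "\<And>s. s \<in> U \<Longrightarrow> Z s = exp (H s + A s)"
    and G_eq: "\<And>s. s \<in> U \<Longrightarrow> G s = H s ^ n"
  shows "deriv G u ^ n = of_nat n ^ n * G u ^ (n - 1) * (deriv Z u / Z u - deriv A u) ^ n"
proof -
  have U_nhds: "\<forall>\<^sub>F x in nhds u. x \<in> U"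
    using U by (rule eventually_nhds_in_open)
  have dH: "(H has_field_derivative deriv H u) (at u)"
    by (rule holomorphic_derivI[OF H U])
  have dA: "(A has_field_derivative deriv A u) (at u)"
    by (rule holomorphic_derivI[OF A U])
  have "deriv G u = deriv (\<lambda>x. H x ^ n) u"
    using U_nhds by (intro deriv_cong_ev) (auto simp: G_eq elim: eventually_mono)
  also have "\<dots> = of_nat n * deriv H u * H u ^ (n - 1)"
    by (rule DERIV_imp_deriv) (auto intro!: derivative_eq_intros dH)
  finally have dG: "deriv G u = of_nat n * deriv H u * H u ^ (n - 1)" .
  have "deriv Z u = deriv (\<lambda>x. exp (H x + A x)) u"
    using U_nhds by (intro deriv_cong_ev) (auto simp: Z_eq elim: eventually_mono)
  also have "\<dots> = exp (H u + A u) * (deriv H u + deriv A u)"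
    by (rule DERIV_imp_deriv) (auto intro!: derivative_eq_intros dH dA)
  finally have "deriv Z u / Z u - deriv A u = deriv H u"
    using Z_eq[OF U(2)] by simp
  then show ?thesis
    by (simp add: dG G_eq[OF U(2)] power_mult_distrib power_mult[symmetric] mult.commute)
qed

lemma nonzero_if_log_power_meromorphic:
  fixes Z A H G :: "complex \<Rightarrow> complex"
  assumes S: "open S" "connected S" and U: "open U" "U \<subseteq> S" "z0 \<in> U"
    and Z: "Z holomorphic_on S" and A: "A holomorphic_on S" and H: "H holomorphic_on U"
    and G: "G meromorphic_on S" and n: "1 \<le> n"
    and Z_eq: "\<And>s. s \<in> U \<Longrightarrow> Z s = exp (H s + A s)"
    and G_eq: "\<And>s. s \<in> U \<Longrightarrow> G s = H s ^ n"
    and "H z0 \<noteq> 0" and "s \<in> S"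
  shows "Z s \<noteq> 0"
proof (rule nonzero_if_log_deriv_power_identity[OF S(1) \<open>s \<in> S\<close> Z A _ n])
  have "z0 \<in> S" using U by blast
  show "G meromorphic_on {s}"
    using \<open>s \<in> S\<close> by (intro meromorphic_on_subset[OF G]) auto
  have Z_mero: "Z meromorphic_on S"
    using Z S(1) by (simp add: analytic_on_imp_meromorphic_on analytic_on_open)
  have "\<forall>\<^sub>F w in at z0. w \<in> U"
    using U(1,3) by (rule eventually_at_in_open')
  then have "\<forall>\<^sub>F w in at z0. Z w \<noteq> 0"
    by eventually_elim (simp add: Z_eq)
  then show "\<forall>\<^sub>F w in at s. Z w \<noteq> 0"
    by (rule meromorphic_eventually_neq_transfer[OF Z_mero S \<open>z0 \<in> S\<close> \<open>s \<in> S\<close>])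
  have "isCont H z0"
    using H U by (intro continuous_on_interior[OF holomorphic_on_imp_continuous_on]) (auto simp: interior_open)
  then have "\<forall>\<^sub>F w in at z0. H w \<noteq> 0"
    using \<open>H z0 \<noteq> 0\<close> by (intro tendsto_imp_eventually_ne) (auto simp: isCont_def)
  with \<open>\<forall>\<^sub>F w in at z0. w \<in> U\<close> have "\<forall>\<^sub>F w in at z0. G w \<noteq> 0"
    by eventually_elim (simp add: G_eq)
  then show "\<forall>\<^sub>F w in at s. G w \<noteq> 0"
    by (rule meromorphic_eventually_neq_transfer[OF G S \<open>z0 \<in> S\<close> \<open>s \<in> S\<close>])
  define F where "F w = deriv G w ^ n - of_nat n ^ n * G w ^ (n - 1) * (deriv Z w / Z w - deriv A w) ^ n" for w
  have "F meromorphic_on S"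
    unfolding F_def using Z A S(1)
    by (intro meromorphic_intros G analytic_on_imp_meromorphic_on) (auto simp: analytic_on_open)
  have "F u = 0" if "u \<in> U" for u
    unfolding F_def using deriv_power_log_identity[OF U(1) that H _ Z_eq G_eq] A U(2)
    by (auto intro: holomorphic_on_subset)
  with \<open>\<forall>\<^sub>F w in at z0. w \<in> U\<close> have "\<forall>\<^sub>F w in at z0. F w = 0"
    by (auto elim: eventually_mono)
  from meromorphic_eventually_eq_transfer[OF \<open>F meromorphic_on S\<close> S \<open>z0 \<in> S\<close> \<open>s \<in> S\<close> this]
  show "\<forall>\<^sub>F w in at s. deriv G w ^ n = of_nat n ^ n * G w ^ (n - 1) * (deriv Z w / Z w - deriv A w) ^ n"
    by (simp add: F_def)
qed

section \<open>The prime sums\<close>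

lemma prime_pr: "prime (pr j)"
  using enumerate_in_set[OF primes_infinite] by (simp add: pr_def)

lemma strict_mono_pr: "strict_mono pr"
  unfolding pr_def by (intro strict_mono_enumerate primes_infinite)

lemma bij_betw_pr: "bij_betw pr UNIV {p. prime p}"
  unfolding pr_def by (intro bij_enumerate primes_infinite)

lemma pr_ge: "j + 2 \<le> pr j"
proof (induction j)
  case 0
  show ?case using prime_ge_2_nat[OF prime_pr[of 0]] by simp
next
  case (Suc j)
  then show ?case using strict_monoD[OF strict_mono_pr, of j "Suc j"] by simp
qed

lemma pr_mult_ge: "1 \<le> k \<Longrightarrow> j + 2 \<le> pr (j * k)"
  using pr_ge[of "j * k"] mult_le_mono2[of 1 k j] by linarith

definition npow :: "complex \<Rightarrow> nat \<Rightarrow> complex" where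
  "npow s n = of_nat n powr - s"

lemma norm_npow: "norm (npow s n) = real n powr - Re s"
  unfolding npow_def by (simp add: norm_powr_real_powr)

lemma holomorphic_npow [holomorphic_intros]: "(\<lambda>s. npow s n) holomorphic_on A"
  unfolding npow_def by (intro holomorphic_intros)

lemma npow_mult: "npow s (a * b) = npow s a * npow s b"
  unfolding npow_def of_nat_mult by (rule powr_times_real_left) auto

lemma norm_npow_le: "\<sigma> \<le> Re s \<Longrightarrow> 1 \<le> n \<Longrightarrow> norm (npow s n) \<le> real n powr - \<sigma>"
  unfolding norm_npow by (intro powr_mono) auto

lemma norm_npow_le_2_powr:
  assumes "\<sigma> \<le> Re s" "0 < \<sigma>" "2 \<le> n"
  shows "norm (npow s n) \<le> 2 powr - \<sigma>"
proof -
  have "norm (npow s n) \<le> real n powr - \<sigma>" using assms by (intro norm_npow_le) auto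
  also have "\<dots> \<le> 2 powr - \<sigma>" using assms by (intro powr_mono2') auto
  finally show ?thesis .
qed

lemma norm_npow_less_1: "0 < Re s \<Longrightarrow> 2 \<le> n \<Longrightarrow> norm (npow s n) < 1"
  using norm_npow_le_2_powr[of "Re s" s n] powr_less_one[of 2 "- Re s"] by simp

lemma summable_norm_npow: "1 < Re s \<Longrightarrow> summable (\<lambda>n. norm (npow s n))"
  unfolding norm_npow by (simp add: summable_real_powr_iff)

lemma summable_pr_powr:
  assumes "1 < \<sigma>" "1 \<le> k"
  shows "summable (\<lambda>j. real (pr (j * k)) powr - \<sigma>)"
proof (rule summable_comparison_test')
  show "summable (\<lambda>j. real (j + 1) powr - \<sigma>)"
    using summable_iff_shift[of "\<lambda>j. real j powr - \<sigma>" 1] assms(1)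
    by (simp add: summable_real_powr_iff)
  have "real (j + 1) \<le> real (pr (j * k))" for j
    using pr_mult_ge[OF assms(2), of j] by linarith
  then show "norm (real (pr (j * k)) powr - \<sigma>) \<le> real (j + 1) powr - \<sigma>" for j
    using assms(1) by (simp add: powr_mono2')
qed

lemma summable_norm_npow_pr:
  "1 < Re s \<Longrightarrow> 1 \<le> k \<Longrightarrow> summable (\<lambda>j. norm (npow s (pr (j * k))))"
  unfolding norm_npow by (rule summable_pr_powr)

lemma eta1_eq_suminf:
  assumes "1 < Re s"
  shows "eta1 s = (\<Sum>j. npow s (pr j))"
proof -
  have "(\<lambda>j. npow s (pr j)) summable_on UNIV"
    using summable_norm_npow_pr[OF assms, of 1] by (intro norm_summable_imp_summable_on) simp
  then have "(\<lambda>j. npow s (pr j)) sums (\<Sum>\<^sub>\<infinity>j. npow s (pr j))"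
    by (intro has_sum_imp_sums has_sum_infsum)
  moreover have "(\<Sum>\<^sub>\<infinity>j. npow s (pr j)) = eta1 s"
    using infsum_reindex_bij_betw[OF bij_betw_pr, of "npow s"] by (simp add: eta1_def npow_def[abs_def])
  ultimately show ?thesis by (simp add: sums_iff)
qed

lemma holomorphic_eta1: "eta1 holomorphic_on {s. 1 < Re s}"
proof -
  have "(\<lambda>s. \<Sum>j. npow s (pr j)) holomorphic_on {s. 1 < Re s}"
  proof (rule holomorphic_on_suminf_halfplane[OF open_halfspace_Re_gt order.refl holomorphic_npow])
    fix \<sigma> R :: real assume "1 < \<sigma>"
    then have "summable (\<lambda>j. real (pr (j * 1)) powr - \<sigma>)" by (rule summable_pr_powr) simp
    moreover have "norm (npow s (pr j)) \<le> real (pr j) powr - \<sigma>" if "\<sigma> \<le> Re s" for s j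
      using that pr_ge[of j] by (intro norm_npow_le) auto
    ultimately show "\<exists>M. summable M \<and> (\<forall>n. \<forall>s\<in>{s. 1 < Re s}. \<sigma> \<le> Re s \<longrightarrow> norm s \<le> R \<longrightarrow> norm (npow s (pr n)) \<le> M n)"
      by auto
  qed
  then show ?thesis
    by (rule holomorphic_transform) (simp add: eta1_eq_suminf)
qed

definition log_rem :: "complex \<Rightarrow> complex" where
  "log_rem w = - Ln (1 - w) - w"

lemma norm_log_rem_le: "norm w < 1 \<Longrightarrow> norm (log_rem w) \<le> norm w ^ 2 / (1 - norm w)"
proof -
  assume "norm w < 1"
  then have "norm (Ln (1 + - w) - - w) \<le> norm (- w) ^ 2 / (1 - norm (- w))"
    by (intro Ln_approx_linear) simp
  then show ?thesis
    by (simp add: log_rem_def norm_minus_commute[of "- Ln (1 - w)"] add.commute)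
qed

lemma exp_log_rem: "norm w < 1 \<Longrightarrow> exp (w + log_rem w) = inverse (1 - w)"
proof -
  assume "norm w < 1"
  then have "1 - w \<noteq> 0" by auto
  then show ?thesis by (simp add: log_rem_def exp_minus)
qed

lemma norm_log_rem_npow_le:
  assumes "\<sigma> \<le> Re s" "0 < \<sigma>" "2 \<le> n"
  shows "norm (log_rem (npow s n)) \<le> real n powr (- 2 * \<sigma>) / (1 - 2 powr - \<sigma>)"
proof -
  define x where "x = norm (npow s n)"
  have x: "0 \<le> x" "x \<le> 2 powr - \<sigma>" "x \<le> real n powr - \<sigma>"
    using assms norm_npow_le_2_powr norm_npow_le by (auto simp: x_def)
  have lt: "2 powr - \<sigma> < (1::real)" using assms by (simp add: powr_less_one)
  have "norm (log_rem (npow s n)) \<le> x ^ 2 / (1 - x)"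
    unfolding x_def by (rule norm_log_rem_le) (use x lt x_def in linarith)
  also have "\<dots> \<le> (real n powr - \<sigma>) ^ 2 / (1 - 2 powr - \<sigma>)"
    using x lt by (intro frac_le power_mono) auto
  also have "(real n powr - \<sigma>) ^ 2 = real n powr (- 2 * \<sigma>)"
    by (simp add: power2_eq_square powr_add[symmetric])
  finally show ?thesis .
qed

lemma holomorphic_log_rem_npow:
  assumes "2 \<le> n"
  shows "(\<lambda>s. log_rem (npow s n)) holomorphic_on {s. 0 < Re s}"
proof -
  have "1 - npow s n \<notin> \<real>\<^sub>\<le>\<^sub>0" if "0 < Re s" for s
  proof -
    have "Re (npow s n) < 1"
      using norm_npow_less_1[OF that assms] complex_Re_le_cmod[of "npow s n"] by linarith
    then show ?thesis by (auto simp: complex_nonpos_Reals_iff)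
  qed
  then show ?thesis
    unfolding log_rem_def by (intro holomorphic_intros holomorphic_on_Ln') auto
qed

definition prime_sum :: "nat \<Rightarrow> complex \<Rightarrow> complex" where
  "prime_sum k s = (\<Sum>j. npow s (pr (j * k)))"

definition log_rem_sum :: "nat \<Rightarrow> complex \<Rightarrow> complex" where
  "log_rem_sum k s = (\<Sum>j. log_rem (npow s (pr (j * k))))"

definition block_defect :: "nat \<Rightarrow> complex \<Rightarrow> complex" where
  "block_defect k s = (\<Sum>j. \<Sum>i<k. npow s (pr (j * k)) - npow s (pr (j * k + i)))"

definition zetak_defect :: "nat \<Rightarrow> complex \<Rightarrow> complex" where
  "zetak_defect k s = block_defect k s + of_nat k * log_rem_sum k s"

lemma summable_norm_log_rem_npow_pr:
  assumes "\<sigma> \<le> Re s" "1/2 < \<sigma>" "1 \<le> k"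
  shows "summable (\<lambda>j. norm (log_rem (npow s (pr (j * k)))))"
proof (rule summable_comparison_test')
  show "summable (\<lambda>j. real (pr (j * k)) powr (- 2 * \<sigma>) / (1 - 2 powr - \<sigma>))"
    using summable_pr_powr[of "2 * \<sigma>" k] assms by (intro summable_divide) simp
  show "norm (norm (log_rem (npow s (pr (j * k))))) \<le> real (pr (j * k)) powr (- 2 * \<sigma>) / (1 - 2 powr - \<sigma>)" for j
    using norm_log_rem_npow_le[of \<sigma> s "pr (j * k)"] pr_ge[of "j * k"] assms by simp
qed

lemma holomorphic_log_rem_sum:
  assumes "1 \<le> k"
  shows "log_rem_sum k holomorphic_on {s. 1/2 < Re s}"
  unfolding log_rem_sum_def[abs_def]
proof (rule holomorphic_on_suminf_halfplane[OF open_halfspace_Re_gt order.refl])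
  show "(\<lambda>s. log_rem (npow s (pr (j * k)))) holomorphic_on {s. 1/2 < Re s}" for j
    using pr_ge[of "j * k"] by (intro holomorphic_on_subset[OF holomorphic_log_rem_npow]) auto
  fix \<sigma> R :: real assume "1/2 < \<sigma>"
  then show "\<exists>M. summable M \<and> (\<forall>j. \<forall>s\<in>{s. 1/2 < Re s}. \<sigma> \<le> Re s \<longrightarrow> norm s \<le> R \<longrightarrow>
      norm (log_rem (npow s (pr (j * k)))) \<le> M j)"
    using summable_pr_powr[of "2 * \<sigma>" k] norm_log_rem_npow_le[OF _ _ order.trans[OF _ pr_mult_ge]] assms
    by (intro exI[of _ "\<lambda>j. real (pr (j * k)) powr (- 2 * \<sigma>) / (1 - 2 powr - \<sigma>)"] conjI summable_divide) auto
qed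

lemma norm_npow_diff_le:
  assumes "1 \<le> a" "a \<le> b" "0 < \<sigma>" "\<sigma> \<le> Re s"
  shows "norm (npow s a - npow s b) \<le> norm s / \<sigma> * (real a powr - \<sigma> - real b powr - \<sigma>)"
  using norm_of_real_powr_diff_le[of "real a" "real b" \<sigma> s] assms by (simp add: npow_def)

lemma norm_block_le:
  assumes "0 < \<sigma>" "\<sigma> \<le> Re s" "1 \<le> k"
  shows "norm (\<Sum>i<k. npow s (pr (j * k)) - npow s (pr (j * k + i)))
    \<le> real k * (norm s / \<sigma>) * (real (pr (j * k)) powr - \<sigma> - real (pr (Suc j * k)) powr - \<sigma>)"
proof -
  have "norm (npow s (pr (j * k)) - npow s (pr (j * k + i)))
      \<le> norm s / \<sigma> * (real (pr (j * k)) powr - \<sigma> - real (pr (Suc j * k)) powr - \<sigma>)" if "i < k" for i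
  proof -
    have mono: "pr (j * k) \<le> pr (j * k + i)" "pr (j * k + i) \<le> pr (Suc j * k)"
      using that by (auto intro: strict_mono_less_eq[OF strict_mono_pr, THEN iffD2])
    have "norm (npow s (pr (j * k)) - npow s (pr (j * k + i)))
        \<le> norm s / \<sigma> * (real (pr (j * k)) powr - \<sigma> - real (pr (j * k + i)) powr - \<sigma>)"
      using mono pr_ge[of "j * k"] assms by (intro norm_npow_diff_le) auto
    also have "\<dots> \<le> norm s / \<sigma> * (real (pr (j * k)) powr - \<sigma> - real (pr (Suc j * k)) powr - \<sigma>)"
      using mono(2) pr_ge[of "j * k + i"] assms by (intro mult_left_mono) (auto simp: powr_mono2')
    finally show ?thesis .
  qed
  then have "norm (\<Sum>i<k. npow s (pr (j * k)) - npow s (pr (j * k + i)))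
      \<le> (\<Sum>i<k. norm s / \<sigma> * (real (pr (j * k)) powr - \<sigma> - real (pr (Suc j * k)) powr - \<sigma>))"
    by (intro order.trans[OF norm_sum sum_mono]) auto
  then show ?thesis by simp
qed

lemma holomorphic_block_defect:
  assumes "1 \<le> k"
  shows "block_defect k holomorphic_on {s. 0 < Re s}"
  unfolding block_defect_def[abs_def]
proof (rule holomorphic_on_suminf_halfplane[OF open_halfspace_Re_gt order.refl])
  show "(\<lambda>s. \<Sum>i<k. npow s (pr (j * k)) - npow s (pr (j * k + i))) holomorphic_on {s. 0 < Re s}" for j
    by (intro holomorphic_intros)
  fix \<sigma> R :: real assume \<sigma>: "0 < \<sigma>"
  define c where "c j = real (pr (j * k)) powr - \<sigma>" for j
  have "filterlim (\<lambda>j. real (pr (j * k))) at_top sequentially"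
  proof (rule filterlim_at_top_mono[OF filterlim_real_sequentially always_eventually], rule allI)
    show "real j \<le> real (pr (j * k))" for j
      using pr_mult_ge[OF assms, of j] by linarith
  qed
  then have "c \<longlonglongrightarrow> 0"
    unfolding c_def using \<sigma> by (intro tendsto_neg_powr) auto
  then have "summable (\<lambda>j. real k * (R / \<sigma>) * (c j - c (Suc j)))"
    by (intro summable_mult telescope_summable')
  moreover have "norm (\<Sum>i<k. npow s (pr (j * k)) - npow s (pr (j * k + i))) \<le> real k * (R / \<sigma>) * (c j - c (Suc j))"
    if s: "\<sigma> \<le> Re s" "norm s \<le> R" for j s
  proof -
    have "c (Suc j) \<le> c j"
      unfolding c_def using pr_ge[of "j * k"] strict_mono_less_eq[OF strict_mono_pr, of "j * k" "Suc j * k"] \<sigma>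
      by (simp add: powr_mono2')
    then have "real k * (norm s / \<sigma>) * (c j - c (Suc j)) \<le> real k * (R / \<sigma>) * (c j - c (Suc j))"
      using s \<sigma> by (intro mult_right_mono mult_left_mono divide_right_mono) auto
    then show ?thesis
      using norm_block_le[OF \<sigma> s(1) assms, of j] by (simp add: c_def)
  qed
  ultimately show "\<exists>M. summable M \<and> (\<forall>j. \<forall>s\<in>{s. 0 < Re s}. \<sigma> \<le> Re s \<longrightarrow> norm s \<le> R \<longrightarrow>
      norm (\<Sum>i<k. npow s (pr (j * k)) - npow s (pr (j * k + i))) \<le> M j)"
    by blast
qed

lemma holomorphic_zetak_defect:
  "1 \<le> k \<Longrightarrow> zetak_defect k holomorphic_on {s. 1/2 < Re s}"
  unfolding zetak_defect_def[abs_def]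
  by (intro holomorphic_intros holomorphic_log_rem_sum holomorphic_on_subset[OF holomorphic_block_defect]) auto

lemma prime_sum_eq:
  assumes s: "1 < Re s" and k: "1 \<le> k"
  shows "of_nat k * prime_sum k s = eta1 s + block_defect k s"
proof -
  have "(\<lambda>j. npow s (pr j)) sums eta1 s"
    using summable_norm_npow_pr[OF s, of 1] eta1_eq_suminf[OF s]
    by (simp add: summable_norm_cancel summable_sums)
  then have eta: "(\<lambda>j. \<Sum>i<k. npow s (pr (j * k + i))) sums eta1 s"
    using sums_group[of _ _ k] k by (simp add: sum.shift_bounds_nat_ivl[of _ 0, simplified] atLeast0LessThan add.commute)
  have "(\<lambda>j. of_nat k * npow s (pr (j * k))) sums (of_nat k * prime_sum k s)"
    unfolding prime_sum_def
    by (intro sums_mult summable_sums summable_norm_cancel[OF summable_norm_npow_pr[OF s k]])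
  from sums_diff[OF this eta] have "(\<lambda>j. \<Sum>i<k. npow s (pr (j * k)) - npow s (pr (j * k + i)))
      sums (of_nat k * prime_sum k s - eta1 s)"
    by (simp add: sum_subtractf)
  then show ?thesis
    unfolding block_defect_def by (simp add: sums_iff)
qed

lemma euler_factors_has_prod:
  assumes s: "1 < Re s" and k: "1 \<le> k"
  shows "(\<lambda>j. inverse (1 - npow s (pr (j * k)))) has_prod exp (prime_sum k s + log_rem_sum k s)"
proof -
  have "(\<lambda>j. npow s (pr (j * k)) + log_rem (npow s (pr (j * k)))) sums (prime_sum k s + log_rem_sum k s)"
    unfolding prime_sum_def log_rem_sum_def using s k
    by (intro sums_add summable_sums summable_norm_cancel[OF summable_norm_npow_pr]
          summable_norm_cancel[OF summable_norm_log_rem_npow_pr[of "Re s"]]) auto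
  then have "(\<lambda>j. exp (npow s (pr (j * k)) + log_rem (npow s (pr (j * k))))) has_prod exp (prime_sum k s + log_rem_sum k s)"
    by (simp add: has_prod_def sums_imp_has_prod_exp)
  moreover have "exp (npow s (pr j) + log_rem (npow s (pr j))) = inverse (1 - npow s (pr j))" for j
    using s pr_ge[of j] by (intro exp_log_rem norm_npow_less_1) auto
  ultimately show ?thesis by simp
qed

lemma zetak_eq_exp:
  assumes s: "1 < Re s" and k: "1 \<le> k"
  shows "zetak k s = exp ((eta1 s + zetak_defect k s) / of_nat k)"
proof -
  have "zetak k s = exp (prime_sum k s + log_rem_sum k s)"
    using has_prod_unique[OF euler_factors_has_prod[OF assms]] by (simp add: zetak_def npow_def)
  also have "prime_sum k s + log_rem_sum k s = (eta1 s + zetak_defect k s) / of_nat k"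
    using prime_sum_eq[OF assms] k by (simp add: zetak_defect_def field_simps)
  finally show ?thesis .
qed

section \<open>The Euler product\<close>

lemma npow_Suc_sums_zeta: "1 < Re s \<Longrightarrow> (\<lambda>n. npow s (Suc n)) sums zeta s"
  using summable_norm_npow[of s] summable_Suc_iff[of "\<lambda>n. norm (npow s n)"]
  by (simp add: zeta_def npow_def summable_norm_cancel summable_sums)

definition rough :: "nat \<Rightarrow> nat set" where
  "rough N = {n. 0 < n \<and> (\<forall>j<N. \<not> pr j dvd n)}"

lemma rough_0: "rough 0 = range Suc"
  by (auto simp: rough_def image_iff gr0_conv_Suc)

lemma one_in_rough: "1 \<in> rough N"
proof -
  have "pr j \<noteq> 1" for j using pr_ge[of j] by simp
  then show ?thesis by (auto simp: rough_def)
qed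

lemma rough_ge: "n \<in> rough N \<Longrightarrow> n \<noteq> 1 \<Longrightarrow> N \<le> n"
proof -
  assume n: "n \<in> rough N" "n \<noteq> 1"
  obtain p where p: "prime p" "p dvd n" using prime_factor_nat[OF n(2)] by blast
  obtain i where i: "p = pr i" using bij_betw_pr p(1) by (auto simp: bij_betw_def)
  have "N \<le> i" using n(1) p(2) i by (auto simp: rough_def not_less[symmetric])
  moreover have "p \<le> n" using p(2) n(1) by (intro dvd_imp_le) (auto simp: rough_def)
  ultimately show "N \<le> n" using pr_ge[of i] i by linarith
qed

lemma pr_mult_in_rough:
  assumes m: "m \<in> rough N"
  shows "pr N * m \<in> rough N"
  unfolding rough_def
proof safe
  show "0 < pr N * m" using m prime_gt_0_nat[OF prime_pr] by (simp add: rough_def)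
  fix j assume j: "j < N" "pr j dvd pr N * m"
  then have "pr j dvd pr N \<or> pr j dvd m" using prime_dvd_mult_iff prime_pr by blast
  moreover have "pr j \<noteq> pr N" using strict_monoD[OF strict_mono_pr j(1)] by simp
  ultimately show False
    using m j(1) primes_dvd_imp_eq[OF prime_pr prime_pr] by (auto simp: rough_def)
qed

lemma rough_Suc: "rough (Suc N) = rough N - (\<lambda>m. pr N * m) ` rough N"
proof -
  have "(\<lambda>m. pr N * m) ` rough N = {n \<in> rough N. pr N dvd n}"
  proof safe
    fix n assume n: "n \<in> rough N" "pr N dvd n"
    then obtain m where m: "n = pr N * m" by blast
    have "m \<in> rough N" using n unfolding m rough_def by (auto intro: dvd_mult_right)
    then show "n \<in> (\<lambda>m. pr N * m) ` rough N" using m by blast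
  qed (auto intro: pr_mult_in_rough)
  then show ?thesis by (auto simp: rough_def less_Suc_eq)
qed

lemma npow_has_sum_rough:
  assumes s: "1 < Re s"
  shows "(npow s has_sum (zeta s * (\<Prod>j<N. 1 - npow s (pr j)))) (rough N)"
proof (induction N)
  case 0
  have "((\<lambda>n. npow s (Suc n)) has_sum zeta s) UNIV"
    using summable_norm_npow[OF s] npow_Suc_sums_zeta[OF s] summable_Suc_iff[of "\<lambda>n. norm (npow s n)"]
    by (intro norm_summable_imp_has_sum) auto
  then show ?case by (simp add: rough_0 has_sum_reindex o_def)
next
  case (Suc N)
  define X where "X = zeta s * (\<Prod>j<N. 1 - npow s (pr j))"
  have inj: "inj_on (\<lambda>m. pr N * m) (rough N)"
    using prime_gt_0_nat[OF prime_pr, of N] by (intro inj_onI) auto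
  have "((\<lambda>m. npow s (pr N) * npow s m) has_sum (npow s (pr N) * X)) (rough N)"
    using Suc.IH unfolding X_def by (rule has_sum_cmult_right)
  then have "(npow s has_sum (npow s (pr N) * X)) ((\<lambda>m. pr N * m) ` rough N)"
    by (simp add: has_sum_reindex[OF inj] o_def npow_mult)
  from has_sum_Diff[OF Suc.IH[folded X_def] this] pr_mult_in_rough have "(npow s has_sum (X - npow s (pr N) * X)) (rough (Suc N))"
    unfolding rough_Suc by blast
  then show ?case by (simp add: X_def algebra_simps)
qed

lemma norm_zeta_partial_euler_product_le:
  assumes s: "1 < Re s"
  shows "norm (zeta s * (\<Prod>j<N. 1 - npow s (pr j)) - 1)
    \<le> (\<Sum>n. norm (npow s n)) - (\<Sum>n<N. norm (npow s n))"
proof -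
  define g where "g n = norm (npow s n)" for n
  have G: "(g has_sum suminf g) UNIV"
    using summable_norm_npow[OF s] by (intro norm_summable_imp_has_sum) (auto simp: g_def[abs_def] summable_sums)
  have "(npow s has_sum (zeta s * (\<Prod>j<N. 1 - npow s (pr j)) - 1)) (rough N - {1})"
    using npow_has_sum_rough[OF s, of N] has_sum_finite[of "{1}" "npow s"] one_in_rough[of N]
    by (intro has_sum_Diff) (auto simp: npow_def)
  then have "zeta s * (\<Prod>j<N. 1 - npow s (pr j)) - 1 = infsum (npow s) (rough N - {1})"
    by (rule infsumI[symmetric])
  also have "norm \<dots> \<le> infsum g (rough N - {1})"
    unfolding g_def using summable_on_subset_banach[OF has_sum_imp_summable[OF G]]
    by (intro norm_infsum_bound) (simp add: g_def[abs_def])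
  also have "\<dots> \<le> infsum g {N..}"
    using rough_ge summable_on_subset_banach[OF has_sum_imp_summable[OF G]]
    by (intro infsum_mono2) (auto simp: g_def)
  also have "infsum g {N..} = suminf g - (\<Sum>n<N. g n)"
    using has_sum_Diff[OF G has_sum_finite[of "{..<N}" g]] by (simp add: infsumI Compl_eq_Diff_UNIV[symmetric])
  finally show ?thesis by (simp add: g_def[abs_def])
qed

lemma zeta_eq_zetak_1:
  assumes s: "1 < Re s"
  shows "zeta s = zetak 1 s"
proof -
  define Q where "Q N = (\<Prod>j<N. 1 - npow s (pr j))" for N
  define g where "g n = norm (npow s n)" for n
  have "(\<lambda>N. \<Sum>n<N. g n) \<longlonglongrightarrow> suminf g"
    using summable_norm_npow[OF s] by (simp add: g_def[abs_def] summable_LIMSEQ)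
  from tendsto_diff[OF tendsto_const[of "suminf g"] this]
  have tail: "(\<lambda>N. suminf g - (\<Sum>n<N. g n)) \<longlonglongrightarrow> 0"
    by simp
  have "\<forall>N. norm (zeta s * Q N - 1) \<le> suminf g - (\<Sum>n<N. g n)"
    using norm_zeta_partial_euler_product_le[OF s] by (simp add: Q_def g_def[abs_def])
  from Lim_null_comparison[OF always_eventually[OF this] tail]
  have "(\<lambda>N. zeta s * Q N - 1) \<longlonglongrightarrow> 0" .
  then have lim: "(\<lambda>N. zeta s * Q N) \<longlonglongrightarrow> 1"
    by (rule LIM_zero_cancel)
  have "zeta s \<noteq> 0"
  proof
    assume "zeta s = 0"
    with lim show False by (simp add: LIMSEQ_const_iff)
  qed
  have "(\<lambda>N. zeta s * inverse (zeta s * Q N)) \<longlonglongrightarrow> zeta s * inverse 1"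
    by (intro tendsto_mult tendsto_const tendsto_inverse lim) simp
  then have "(\<lambda>N. inverse (Q N)) \<longlonglongrightarrow> zeta s"
    using \<open>zeta s \<noteq> 0\<close> by (simp add: mult.assoc[symmetric])
  moreover have "(\<lambda>N. inverse (Q N)) \<longlonglongrightarrow> zetak 1 s"
    using has_prod_imp_tendsto'[OF euler_factors_has_prod[OF s order.refl]]
      has_prod_unique[OF euler_factors_has_prod[OF s order.refl]]
    by (simp add: Q_def zetak_def prod_inversef[symmetric] o_def npow_def)
  ultimately show ?thesis by (rule LIMSEQ_unique)
qed

section \<open>The region and the continuation of zeta\<close>

lemma Omega_half_subset: "Omega_half \<subseteq> {s. 1/2 < Re s}"
  unfolding Omega_half_def by auto

lemma Re_gt_1_in_Omega_half: "1 < Re s \<Longrightarrow> s \<in> Omega_half"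
  unfolding Omega_half_def by auto

lemma one_notin_Omega_half: "1 \<notin> Omega_half"
  unfolding Omega_half_def by (auto intro: exI[of _ 1])

lemma open_Omega_half: "open Omega_half"
proof -
  have "closed (complex_of_real ` {1/2..1})"
    by (intro compact_imp_closed compact_continuous_image continuous_intros) auto
  moreover have "Omega_half = {s. 1/2 < Re s} - complex_of_real ` {1/2..1}"
    unfolding Omega_half_def by auto
  ultimately show ?thesis by (metis open_Diff open_halfspace_Re_gt)
qed

lemma starlike_Omega_half: "starlike Omega_half"
  unfolding starlike_def
proof (intro bexI ballI subsetI)
  show "2 \<in> Omega_half" by (simp add: Re_gt_1_in_Omega_half)
  fix x y assume x: "x \<in> Omega_half" and "y \<in> closed_segment 2 x"
  then obtain u where u: "0 \<le> u" "u \<le> 1" "y = (1 - u) *\<^sub>R 2 + u *\<^sub>R x"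
    by (auto simp: in_segment)
  have Re_y: "Re y = (1 - u) * 2 + u * Re x" and Im_y: "Im y = u * Im x"
    using u(3) by simp_all
  have x': "1/2 < Re x" "\<not> (Im x = 0 \<and> Re x \<le> 1)"
    using x by (auto simp: Omega_half_def complex_eq_iff)
  have "1/2 < Re y"
  proof (cases "u = 1")
    case False
    have "u * (1/2) \<le> u * Re x" using u x' by (intro mult_left_mono) auto
    moreover have "u < 1" using u False by simp
    ultimately show ?thesis unfolding Re_y by (simp add: algebra_simps)
  qed (use x' in \<open>simp add: Re_y\<close>)
  moreover have "\<not> (Im y = 0 \<and> Re y \<le> 1)"
  proof
    assume y: "Im y = 0 \<and> Re y \<le> 1"
    show False
    proof (cases "u = 0")
      case False
      then have "1 < Re x" using y x' unfolding Im_y by auto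
      moreover have "0 < u" using u False by simp
      ultimately have "u * 1 < u * Re x" by (intro mult_strict_left_mono)
      then show False using y u unfolding Re_y by (simp add: algebra_simps)
    qed (use y Re_y in simp)
  qed
  ultimately show "y \<in> Omega_half"
    by (auto simp: Omega_half_def complex_eq_iff)
qed

lemma has_field_derivative_powr_primitive:
  fixes p s z :: complex
  assumes "z \<notin> \<real>\<^sub>\<le>\<^sub>0" "s \<noteq> 1"
  shows "((\<lambda>z. p * z + z powr (1 - s) / (s - 1)) has_field_derivative (p - z powr - s)) (at z)"
proof -
  have "(1 - s) * w / (s - 1) = - w" for w
    using assms(2) by (simp add: field_simps)
  then have "p * 1 + (1 - s) * z powr (1 - s - 1) / (s - 1) = p - z powr - s"
    by simp
  with DERIV_add[OF DERIV_cmult[OF DERIV_ident] DERIV_cdivide[OF has_field_derivative_powr[OF assms(1)]]]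
  show ?thesis by metis
qed

text \<open>The term is \<open>(n+1) powr -s\<close> minus the integral of \<open>x powr -s\<close> over \<open>[n+1, n+2]\<close>;
  these integrals add up to \<open>1/(s - 1)\<close>.\<close>
definition zeta_cont_term :: "complex \<Rightarrow> nat \<Rightarrow> complex" where
  "zeta_cont_term s n =
     npow s (Suc n) - (of_nat (Suc n) powr (1 - s) - of_nat (Suc (Suc n)) powr (1 - s)) / (s - 1)"

definition zeta_cont :: "complex \<Rightarrow> complex" where
  "zeta_cont s = 1 / (s - 1) + (\<Sum>n. zeta_cont_term s n)"

lemma norm_zeta_cont_term_le:
  assumes "0 < \<delta>" "\<delta> \<le> Re s" "s \<noteq> 1"
  shows "norm (zeta_cont_term s n) \<le> norm s / \<delta> * (real (Suc n) powr - \<delta> - real (Suc (Suc n)) powr - \<delta>)"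
proof -
  define a where "a = real (Suc n)"
  define p where "p = npow s (Suc n)"
  define B where "B = norm s / \<delta> * (a powr - \<delta> - (a + 1) powr - \<delta>)"
  define \<phi> where "\<phi> z = p * z + z powr (1 - s) / (s - 1)" for z :: complex
  have "norm (\<phi> (of_real (a + 1)) - \<phi> (of_real a)) \<le> B * norm (of_real (a + 1) - of_real a :: complex)"
  proof (rule field_differentiable_bound[where S = "closed_segment (of_real a) (of_real (a + 1))"])
    fix z assume "z \<in> closed_segment (of_real a) (of_real (a + 1) :: complex)"
    then have "z \<in> of_real ` closed_segment a (a + 1)"
      by (simp only: closed_segment_of_real)
    then obtain t where t: "z = of_real t" "a \<le> t" "t \<le> a + 1"
      by (auto simp: closed_segment_eq_real_ivl)
    have "1 \<le> a" by (simp add: a_def)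
    then have "z \<notin> \<real>\<^sub>\<le>\<^sub>0" using t by (auto simp: complex_nonpos_Reals_iff)
    then have "(\<phi> has_field_derivative (p - z powr - s)) (at z)"
      unfolding \<phi>_def[abs_def] using assms(3) by (rule has_field_derivative_powr_primitive)
    then show "(\<phi> has_field_derivative (p - z powr - s)) (at z within closed_segment (of_real a) (of_real (a + 1)))"
      by (rule has_field_derivative_at_within)
    have "norm (p - z powr - s) \<le> norm s / \<delta> * (a powr - \<delta> - t powr - \<delta>)"
      unfolding p_def t(1) npow_def using \<open>1 \<le> a\<close> t assms
      by (simp add: a_def norm_of_real_powr_diff_le[of "real (Suc n)", simplified])
    also have "\<dots> \<le> B"
      unfolding B_def using t \<open>1 \<le> a\<close> assms by (intro mult_left_mono) (auto intro: powr_mono2')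
    finally show "norm (p - z powr - s) \<le> B" .
  qed auto
  also have "\<phi> (of_real (a + 1)) - \<phi> (of_real a) = zeta_cont_term s n"
  proof -
    have "(of_real (a + 1) :: complex) = of_nat (Suc n) + 1" "(of_real a :: complex) = of_nat (Suc n)"
      by (simp_all add: a_def)
    then show ?thesis
      unfolding \<phi>_def zeta_cont_term_def p_def by (simp add: diff_divide_distrib algebra_simps)
  qed
  finally show ?thesis by (simp add: B_def a_def)
qed

lemma zeta_cont_eq_zeta:
  assumes s: "1 < Re s"
  shows "zeta_cont s = zeta s"
proof -
  define c where "c n = (of_nat (Suc n) :: complex) powr (1 - s)" for n
  have "c \<longlonglongrightarrow> 0"
    unfolding c_def using s by (intro tendsto_neg_powr_complex_of_nat[OF filterlim_Suc]) auto
  then have "(\<lambda>n. (c n - c (Suc n)) / (s - 1)) sums ((c 0 - 0) / (s - 1))"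
    by (intro sums_divide telescope_sums')
  then have "(\<lambda>n. (c n - c (Suc n)) / (s - 1)) sums (1 / (s - 1))"
    by (simp add: c_def)
  from sums_diff[OF npow_Suc_sums_zeta[OF s] this]
  have "(\<lambda>n. zeta_cont_term s n) sums (zeta s - 1 / (s - 1))"
    by (simp add: zeta_cont_term_def c_def)
  then show ?thesis
    by (simp add: zeta_cont_def sums_iff)
qed

lemma holomorphic_zeta_cont: "zeta_cont holomorphic_on Omega_half"
proof -
  have "(\<lambda>s. \<Sum>n. zeta_cont_term s n) holomorphic_on Omega_half"
  proof (rule holomorphic_on_suminf_halfplane[where c = 0, OF open_Omega_half])
    show "Omega_half \<subseteq> {s. 0 < Re s}" using Omega_half_subset by auto
    show "(\<lambda>s. zeta_cont_term s n) holomorphic_on Omega_half" for n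
      unfolding zeta_cont_term_def using one_notin_Omega_half by (intro holomorphic_intros) auto
    fix \<sigma> R :: real assume \<sigma>: "0 < \<sigma>"
    define c where "c n = real (Suc n) powr - \<sigma>" for n
    have "c \<longlonglongrightarrow> 0"
      unfolding c_def using \<sigma>
      by (intro tendsto_neg_powr filterlim_compose[OF filterlim_real_sequentially filterlim_Suc]) auto
    then have "summable (\<lambda>n. R / \<sigma> * (c n - c (Suc n)))"
      by (intro summable_mult telescope_summable')
    moreover have "norm (zeta_cont_term s n) \<le> R / \<sigma> * (c n - c (Suc n))"
      if s: "s \<in> Omega_half" "\<sigma> \<le> Re s" "norm s \<le> R" for s n
    proof -
      have "norm (zeta_cont_term s n) \<le> norm s / \<sigma> * (c n - c (Suc n))"
        unfolding c_def using \<sigma> s one_notin_Omega_half by (intro norm_zeta_cont_term_le) auto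
      also have "\<dots> \<le> R / \<sigma> * (c n - c (Suc n))"
        unfolding c_def using \<sigma> s by (intro mult_right_mono divide_right_mono) (auto intro: powr_mono2')
      finally show ?thesis .
    qed
    ultimately show "\<exists>M. summable M \<and> (\<forall>n. \<forall>s\<in>Omega_half. \<sigma> \<le> Re s \<longrightarrow> norm s \<le> R \<longrightarrow>
        norm (zeta_cont_term s n) \<le> M n)"
      by blast
  qed
  then show ?thesis
    unfolding zeta_cont_def[abs_def] using one_notin_Omega_half by (intro holomorphic_intros) auto
qed

section \<open>The equivalences\<close>

lemma eta1_2_neq_0: "eta1 2 \<noteq> 0"
proof -
  have s: "1 < Re (2 :: complex)" by simp
  have sum: "summable (\<lambda>j. npow 2 (pr j))"
    using summable_norm_cancel[OF summable_norm_npow_pr[OF s, of 1]] by simp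
  have "npow 2 (pr j) = of_real (real (pr j) powr - 2)" for j
    using powr_of_real[of "real (pr j)" "- 2"] by (simp add: npow_def)
  moreover have "0 < real (pr j) powr - 2" for j
    using pr_ge[of j] by simp
  ultimately have "0 < (\<Sum>j. Re (npow 2 (pr j)))"
    using summable_Re[OF sum] by (intro suminf_pos) auto
  also have "\<dots> = Re (eta1 2)"
    using eta1_eq_suminf[OF s] Re_suminf[OF sum] by simp
  finally show ?thesis by auto
qed

lemma extends_analytic_nonzero_zetak_iff:
  assumes k: "1 \<le> k"
  shows "extends_analytic_nonzero (zetak k) Omega_half \<longleftrightarrow> extends_analytic eta1 Omega_half"
proof
  assume "extends_analytic_nonzero (zetak k) Omega_half"
  then obtain h where h: "h holomorphic_on Omega_half" "\<And>s. 1 < Re s \<Longrightarrow> h s = zetak k s"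
    "\<And>s. s \<in> Omega_half \<Longrightarrow> h s \<noteq> 0"
    unfolding extends_analytic_nonzero_def by blast
  obtain L where L: "L holomorphic_on Omega_half" "\<And>s. s \<in> Omega_half \<Longrightarrow> h s = exp (L s)"
    using contractible_imp_holomorphic_log[OF h(1) starlike_imp_contractible[OF starlike_Omega_half] h(3)]
    by blast
  define \<phi> where "\<phi> s = (eta1 s + zetak_defect k s) / of_nat k" for s
  obtain c where c: "\<And>s. s \<in> {s. 1 < Re s} \<Longrightarrow> L s = \<phi> s + c"
  proof (rule exp_eq_imp_diff_constant)
    show "L holomorphic_on {s. 1 < Re s}"
      using L(1) by (rule holomorphic_on_subset) (auto intro: Re_gt_1_in_Omega_half)
    show "\<phi> holomorphic_on {s. 1 < Re s}"
      unfolding \<phi>_def[abs_def] using k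
      by (intro holomorphic_intros holomorphic_eta1 holomorphic_on_subset[OF holomorphic_zetak_defect]) auto
    show "exp (L s) = exp (\<phi> s)" if "s \<in> {s. 1 < Re s}" for s
      using that L(2)[OF Re_gt_1_in_Omega_half] h(2) zetak_eq_exp[OF _ k] by (simp add: \<phi>_def)
  qed (auto intro: open_halfspace_Re_gt convex_connected convex_halfspace_Re_gt)
  have "(\<lambda>s. of_nat k * (L s - c) - zetak_defect k s) holomorphic_on Omega_half"
    using L(1) holomorphic_zetak_defect[OF k] Omega_half_subset
    by (intro holomorphic_intros) (auto intro: holomorphic_on_subset)
  moreover have "of_nat k * (L s - c) - zetak_defect k s = eta1 s" if "1 < Re s" for s
    using c[of s] that k by (simp add: \<phi>_def)
  ultimately show "extends_analytic eta1 Omega_half"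
    unfolding extends_analytic_def by blast
next
  assume "extends_analytic eta1 Omega_half"
  then obtain g where g: "g holomorphic_on Omega_half" "\<And>s. 1 < Re s \<Longrightarrow> g s = eta1 s"
    unfolding extends_analytic_def by blast
  have "(\<lambda>s. exp ((g s + zetak_defect k s) / of_nat k)) holomorphic_on Omega_half"
    using g(1) holomorphic_zetak_defect[OF k] Omega_half_subset k
    by (intro holomorphic_intros) (auto intro: holomorphic_on_subset)
  then show "extends_analytic_nonzero (zetak k) Omega_half"
    unfolding extends_analytic_nonzero_def using g(2) zetak_eq_exp[OF _ k] by auto
qed

lemma extends_analytic_nonzero_zeta_iff:
  "extends_analytic_nonzero zeta Omega_half \<longleftrightarrow> extends_analytic eta1 Omega_half"
  using extends_analytic_nonzero_zetak_iff[of 1] zeta_eq_zetak_1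
  by (simp add: extends_analytic_nonzero_def)

lemma extends_meromorphic_eta1_power_iff:
  assumes n: "1 \<le> n"
  shows "extends_meromorphic (\<lambda>s. eta1 s ^ n) Omega_half \<longleftrightarrow> extends_analytic eta1 Omega_half"
proof
  assume "extends_meromorphic (\<lambda>s. eta1 s ^ n) Omega_half"
  then obtain G where G: "G meromorphic_on Omega_half" "\<And>s. 1 < Re s \<Longrightarrow> G s = eta1 s ^ n"
    unfolding extends_meromorphic_def by blast
  have "zeta_cont s \<noteq> 0" if "s \<in> Omega_half" for s
  proof (rule nonzero_if_log_power_meromorphic[OF open_Omega_half _ open_halfspace_Re_gt _ _
        holomorphic_zeta_cont _ holomorphic_eta1 G(1) n _ G(2) eta1_2_neq_0 that])
    show "connected Omega_half" by (rule starlike_imp_connected[OF starlike_Omega_half])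
    show "{s. 1 < Re s} \<subseteq> Omega_half" "2 \<in> {s. 1 < Re s}"
      by (auto intro: Re_gt_1_in_Omega_half)
    show "zetak_defect 1 holomorphic_on Omega_half"
      using holomorphic_zetak_defect[of 1] Omega_half_subset by (auto intro: holomorphic_on_subset)
    show "zeta_cont s = exp (eta1 s + zetak_defect 1 s)" if "s \<in> {s. 1 < Re s}" for s
      using that zeta_cont_eq_zeta zeta_eq_zetak_1 zetak_eq_exp[of s 1] by simp
  qed simp
  then have "extends_analytic_nonzero zeta Omega_half"
    unfolding extends_analytic_nonzero_def using holomorphic_zeta_cont zeta_cont_eq_zeta by blast
  then show "extends_analytic eta1 Omega_half"
    by (rule extends_analytic_nonzero_zeta_iff[THEN iffD1])
next
  assume "extends_analytic eta1 Omega_half"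
  then obtain g where g: "g holomorphic_on Omega_half" "\<And>s. 1 < Re s \<Longrightarrow> g s = eta1 s"
    unfolding extends_analytic_def by blast
  have "(\<lambda>s. g s ^ n) meromorphic_on Omega_half"
    using g(1) open_Omega_half
    by (intro analytic_on_imp_meromorphic_on) (auto simp: analytic_on_open intro: holomorphic_intros)
  then show "extends_meromorphic (\<lambda>s. eta1 s ^ n) Omega_half"
    unfolding extends_meromorphic_def using g(2) by auto
qed

theorem mainTheorem9:
  shows "(extends_analytic eta1 Omega_half \<longleftrightarrow> extends_meromorphic eta1 Omega_half)
    \<and> (extends_analytic eta1 Omega_half \<longleftrightarrow> extends_analytic_nonzero zeta Omega_half)
    \<and> (extends_analytic eta1 Omega_half \<longleftrightarrow>
         (\<exists>i::nat. i \<ge> 2 \<and> extends_analytic_nonzero (zetak i) Omega_half))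
    \<and> (extends_analytic eta1 Omega_half \<longleftrightarrow>
         (\<forall>i::nat. i \<ge> 1 \<longrightarrow> extends_analytic_nonzero (zetak i) Omega_half))
    \<and> (extends_analytic eta1 Omega_half \<longleftrightarrow>
         (\<exists>n::nat. n \<ge> 1 \<and> extends_meromorphic (\<lambda>s. eta1 s ^ n) Omega_half))
    \<and> (extends_analytic eta1 Omega_half \<longleftrightarrow>
         (\<forall>n::nat. n \<ge> 1 \<longrightarrow> extends_meromorphic (\<lambda>s. eta1 s ^ n) Omega_half))"
proof -
  have "\<exists>i::nat. 2 \<le> i" "\<exists>i::nat. 1 \<le> i" by auto
  with extends_meromorphic_eta1_power_iff[of 1] show ?thesis
    by (simp add: extends_analytic_nonzero_zeta_iff extends_analytic_nonzero_zetak_iff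
        extends_meromorphic_eta1_power_iff cong: conj_cong)
qed

end
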